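(* Let $\mathcal{B}=\langle V,F,E\rangle$ be a self-contained finite bipartite graph and $M$ an arbitrary perfect matching for $\mathcal{B}$. Then the directed cluster graph $\mathrm{merge}(\mathrm{clust}(\mathcal{G}(\mathcal{B},M)))$ coincides with the output of Algorithm 1 applied to $\mathcal{B}$ with no exogenous vertices.
   Context: $\mathrm{adj}_{\mathcal{B}}(X)$ is the set of neighbours of $X$. $F'\subseteq F$ is self-contained if $|F'|=|\mathrm{adj}_{\mathcal{B}}(F')|$ and $|F''|\le|\mathrm{adj}_{\mathcal{B}}(F'')|$ for all $F''\subseteq F'$; $\mathcal{B}$ is self-contained if $|F|=|V|$ and $F$ is self-contained; minimal self-contained = non-empty self-contained with no non-empty strict self-contained subset. A directed cluster graph is a pair $\langle\mathcal{V},\mathcal{E}\rangle$ with $\mathcal{V}$ a partition of a vertex set and $\mathcal{E}$ a set of edges $x\to C$ from vertices to clusters. $M(X)$ is the set of vertices matched by $M$ to vertices of $X$. (i) $\mathcal{G}(\mathcal{B},M)$: directed graph on $V\cup F$ with, for each $(v-f)\in E$, the edge $f\to v$ if $(v-f)\in M$ and $v\to f$ otherwise. (ii) $\mathrm{clust}(\mathcal{G})=\langle\mathcal{V}',\mathcal{E}'\rangle$: $\mathcal{V}'$ the partition into strongly connected components and $\mathcal{E}'=\{x\to\mathrm{cl}(w):(x\to w)\text{ in }\mathcal{G},\ x\notin\mathrm{cl}(w)\}$, with $\mathrm{cl}(w)$ the component of $w$. (iii) $\mathrm{merge}(\langle\mathcal{V}',\mathcal{E}'\rangle)=\langle\mathcal{V},\mathcal{E}\rangle$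 with $\mathcal{V}=\{S\cup M(S):S\in\mathcal{V}'\}$ and $\mathcal{E}=\{x\to S\cup M(S):(x\to S)\in\mathcal{E}',\ x\notin M(S)\}$. Algorithm 1 (no exogenous vertices): start with $\mathcal{V}=\mathcal{E}=\emptyset$ and $\mathcal{B}'=\langle V',F',E'\rangle=\mathcal{B}$; while $\mathcal{B}'$ is non-null: choose a minimal self-contained set $S_F$ of $\mathcal{B}'$, let $C=S_F\cup\mathrm{adj}_{\mathcal{B}'}(S_F)$, add $C$ to $\mathcal{V}$, add $v\to C$ for every $v\in\mathrm{adj}_{\mathcal{B}}(S_F)\setminus\mathrm{adj}_{\mathcal{B}'}(S_F)$, replace $\mathcal{B}'$ by its subgraph induced by $(V'\cup F')\setminus C$. Output $\langle\mathcal{V},\mathcal{E}\rangle$. *)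

theory Defs
  imports Main
begin

definition bipartite :: "'a set \<Rightarrow> 'a set \<Rightarrow> ('a \<times> 'a) set \<Rightarrow> bool" where
  "bipartite V F E \<longleftrightarrow> V \<inter> F = {} \<and> E \<subseteq> V \<times> F"

definition adj :: "('a \<times> 'a) set \<Rightarrow> 'a set \<Rightarrow> 'a set" where
  "adj E X = {v. \<exists>f\<in>X. (v, f) \<in> E}"

definition self_contained_set :: "'a set \<Rightarrow> ('a \<times> 'a) set \<Rightarrow> 'a set \<Rightarrow> bool" where
  "self_contained_set F E F' \<longleftrightarrow> F' \<subseteq> F \<and> card F' = card (adj E F') \<and>
     (\<forall>F''\<subseteq>F'. card F'' \<le> card (adj E F''))"

definition self_contained_graph :: "'a set \<Rightarrow> 'a set \<Rightarrow> ('a \<times> 'a) set \<Rightarrow> bool" where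
  "self_contained_graph V F E \<longleftrightarrow> card F = card V \<and> self_contained_set F E F"

definition minimal_self_contained :: "'a set \<Rightarrow> ('a \<times> 'a) set \<Rightarrow> 'a set \<Rightarrow> bool" where
  "minimal_self_contained F E S \<longleftrightarrow> S \<noteq> {} \<and> self_contained_set F E S \<and>
     \<not> (\<exists>S'. S' \<noteq> {} \<and> S' \<subset> S \<and> self_contained_set F E S')"

definition perfect_matching :: "'a set \<Rightarrow> 'a set \<Rightarrow> ('a \<times> 'a) set \<Rightarrow> ('a \<times> 'a) set \<Rightarrow> bool" where
  "perfect_matching V F E M \<longleftrightarrow> M \<subseteq> E \<and>
     (\<forall>v\<in>V. \<exists>!f. (v, f) \<in> M) \<and> (\<forall>f\<in>F. \<exists>!v. (v, f) \<in> M)"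

text \<open>The directed graph G(B,M) (edge relation; its vertex set is V \<union> F).\<close>
definition dgraph :: "('a \<times> 'a) set \<Rightarrow> ('a \<times> 'a) set \<Rightarrow> ('a \<times> 'a) set" where
  "dgraph E M = {(f, v). (v, f) \<in> M} \<union> {(v, f). (v, f) \<in> E - M}"

definition scc :: "'a set \<Rightarrow> ('a \<times> 'a) set \<Rightarrow> 'a \<Rightarrow> 'a set" where
  "scc W R w = {u \<in> W. (w, u) \<in> R\<^sup>* \<and> (u, w) \<in> R\<^sup>*}"

text \<open>Directed cluster graphs: a set of clusters and edges from vertices to clusters.\<close>
type_synonym 'a cluster_graph = "'a set set \<times> ('a \<times> 'a set) set"

definition clust :: "'a set \<Rightarrow> ('a \<times> 'a) set \<Rightarrow> 'a cluster_graph" where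
  "clust W R = (scc W R ` W,
     {(x, scc W R w) | x w. x \<in> W \<and> w \<in> W \<and> (x, w) \<in> R \<and> x \<notin> scc W R w})"

definition matched :: "('a \<times> 'a) set \<Rightarrow> 'a set \<Rightarrow> 'a set" where
  "matched M X = {u. \<exists>x\<in>X. (x, u) \<in> M \<or> (u, x) \<in> M}"

definition merge :: "('a \<times> 'a) set \<Rightarrow> 'a cluster_graph \<Rightarrow> 'a cluster_graph" where
  "merge M G = ((\<lambda>S. S \<union> matched M S) ` fst G,
     {(x, S \<union> matched M S) | x S. (x, S) \<in> snd G \<and> x \<notin> matched M S})"

text \<open>E is the edge set of the original
  graph B; the state consists of the current graph B' = (V', F', E') and the clusters
  and edges constructed so far; the last argument is the output.  The choice of the
  minimal self-contained set is nondeterministic.\<close>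
inductive alg1 :: "('a \<times> 'a) set \<Rightarrow> 'a set \<Rightarrow> 'a set \<Rightarrow> ('a \<times> 'a) set \<Rightarrow>
    'a set set \<Rightarrow> ('a \<times> 'a set) set \<Rightarrow> 'a cluster_graph \<Rightarrow> bool" for E where
  stop: "V' \<union> F' = {} \<Longrightarrow> alg1 E V' F' E' Vs Es (Vs, Es)"
| step: "V' \<union> F' \<noteq> {} \<Longrightarrow> minimal_self_contained F' E' S \<Longrightarrow> C = S \<union> adj E' S \<Longrightarrow>
    alg1 E (V' - C) (F' - C) (E' \<inter> ((V' - C) \<times> (F' - C))) (insert C Vs)
      (Es \<union> {(v, C) | v. v \<in> adj E S - adj E' S}) res \<Longrightarrow>
    alg1 E V' F' E' Vs Es res"

end

theory Submission
  imports Defs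
begin

(* Relative to the perfect matching M, a set S of F-vertices of the current graph B' is
  self-contained iff adj(S) = M(S), i.e. iff no edge of G(B,M) enters S \<union> M(S) from the other
  remaining vertices.  Hence the remaining F-vertices reaching a given h \<in> S form a
  self-contained set, so a minimal self-contained S is strongly connected in G, and
  C = S \<union> adj(S) is a strongly connected component merged with its mates.  By induction, the
  vertices removed by Algorithm 1 always form a union of merged components that no edge from the
  remaining vertices enters, and the clusters and edges produced so far are those of
  merge(clust G) lying in, resp. pointing into, the removed part. *)

lemma rtrancl_Image_closed: "R `` A \<subseteq> A \<Longrightarrow> (x, y) \<in> R\<^sup>* \<Longrightarrow> x \<in> A \<Longrightarrow> y \<in> A"
  by (metis Image_closed_trancl ImageI)

lemma scc_refl: "w \<in> W \<Longrightarrow> w \<in> scc W R w"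
  unfolding scc_def by auto

lemma scc_eq: "u \<in> scc W R w \<Longrightarrow> scc W R u = scc W R w"
  unfolding scc_def by (auto intro: rtrancl_trans)

lemma exists_minimal_self_contained:
  assumes "finite X" and "X \<noteq> {}" and "self_contained_set F E X"
  shows "\<exists>S \<subseteq> X. minimal_self_contained F E S"
proof -
  define P where "P S \<longleftrightarrow> S \<noteq> {} \<and> S \<subseteq> X \<and> self_contained_set F E S" for S
  obtain S where "P S" and least: "\<forall>S'. P S' \<longrightarrow> card S \<le> card S'"
    using ex_has_least_nat[of P X card] assms unfolding P_def by blast
  have "finite S" using \<open>P S\<close> \<open>finite X\<close> finite_subset unfolding P_def by blast
  have "\<not> P S'" if "S' \<subset> S" for S'
    using least psubset_card_mono[OF \<open>finite S\<close> that] by (meson leD)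
  then have "\<not> (\<exists>S'. S' \<noteq> {} \<and> S' \<subset> S \<and> self_contained_set F E S')"
    using \<open>P S\<close> unfolding P_def by (meson psubset_imp_subset subset_trans)
  with \<open>P S\<close> show ?thesis
    unfolding P_def minimal_self_contained_def by blast
qed

locale matched_bipartite =
  fixes V F :: "'a set" and E M :: "('a \<times> 'a) set"
  assumes finite_V: "finite V" and finite_F: "finite F"
    and bipartite: "bipartite V F E"
    and perfect_matching: "perfect_matching V F E M"
begin

abbreviation "W \<equiv> V \<union> F"
abbreviation "G \<equiv> dgraph E M"

lemma V_F_disjoint: "V \<inter> F = {}"
  using bipartite unfolding bipartite_def by blast

lemma E_subset: "E \<subseteq> V \<times> F"
  using bipartite unfolding bipartite_def by blast

lemma M_subset_E: "M \<subseteq> E"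
  using perfect_matching unfolding perfect_matching_def by blast

lemma M_memD: "(v, f) \<in> M \<Longrightarrow> v \<in> V \<and> f \<in> F"
  using M_subset_E E_subset by auto

lemma M_unique_V: "\<forall>v\<in>V. \<exists>!f. (v, f) \<in> M"
  using perfect_matching unfolding perfect_matching_def by blast

lemma M_unique_F: "\<forall>f\<in>F. \<exists>!v. (v, f) \<in> M"
  using perfect_matching unfolding perfect_matching_def by blast

lemma ex_M_V: "v \<in> V \<Longrightarrow> \<exists>f. (v, f) \<in> M"
  using M_unique_V by blast

lemma M_functional: "(v, f) \<in> M \<Longrightarrow> (v, f') \<in> M \<Longrightarrow> f = f'"
  using M_unique_V M_memD by blast

lemma M_injective: "(v, f) \<in> M \<Longrightarrow> (v', f) \<in> M \<Longrightarrow> v = v'"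
  using M_unique_F M_memD by blast

definition mate :: "'a \<Rightarrow> 'a" where
  "mate f = (THE v. (v, f) \<in> M)"

lemma mate_in_M: "f \<in> F \<Longrightarrow> (mate f, f) \<in> M"
  unfolding mate_def using M_unique_F by (metis theI')

lemma mate_eq: "(v, f) \<in> M \<Longrightarrow> mate f = v"
  using mate_in_M M_memD M_injective by blast

lemma inj_on_mate: "inj_on mate F"
  by (rule inj_onI) (metis mate_in_M M_functional)

lemma matched_F_eq_image: "X \<subseteq> F \<Longrightarrow> matched M X = mate ` X"
  unfolding matched_def using M_memD V_F_disjoint mate_in_M mate_eq by blast

lemma card_matched_F: "X \<subseteq> F \<Longrightarrow> card (matched M X) = card X"
  using matched_F_eq_image inj_on_mate by (metis card_image inj_on_subset)

lemma matched_singleton_F: "(v, f) \<in> M \<Longrightarrow> matched M {f} = {v}"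
  unfolding matched_def using M_memD V_F_disjoint M_injective by blast

lemma matched_singleton_V: "(v, f) \<in> M \<Longrightarrow> matched M {v} = {f}"
  unfolding matched_def using M_memD V_F_disjoint M_functional by blast

lemma dgraph_in_W: "(x, y) \<in> G \<Longrightarrow> x \<in> W \<and> y \<in> W"
  using M_subset_E E_subset unfolding dgraph_def by auto

lemma dgraph_from_F: "(f, y) \<in> G \<Longrightarrow> f \<in> F \<Longrightarrow> (y, f) \<in> M"
  using E_subset V_F_disjoint unfolding dgraph_def by auto

lemma dgraph_into_V: "(y, v) \<in> G \<Longrightarrow> v \<in> V \<Longrightarrow> (v, y) \<in> M"
  using E_subset V_F_disjoint unfolding dgraph_def by auto

lemma dgraph_into_F: "(x, f) \<in> G \<Longrightarrow> f \<in> F \<Longrightarrow> (x, f) \<in> E - M"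
  using M_memD V_F_disjoint unfolding dgraph_def by auto

lemma dgraph_mate: "(v, f) \<in> M \<Longrightarrow> (f, v) \<in> G"
  unfolding dgraph_def by auto

lemma dgraph_unmatched: "(v, f) \<in> E - M \<Longrightarrow> (v, f) \<in> G"
  unfolding dgraph_def by auto

definition cluster :: "'a \<Rightarrow> 'a set" where
  "cluster x = scc W G x \<union> matched M (scc W G x)"

(* The only edge leaving f goes to v and the only edge entering v comes from f, so every
  cycle through f or v contains a path from v to f. *)
lemma scc_singleton_if_unreachable:
  assumes vf: "(v, f) \<in> M" and unreachable: "(v, f) \<notin> G\<^sup>*"
  shows "scc W G f = {f}" and "scc W G v = {v}"
proof -
  have "v \<in> V" and "f \<in> F" using M_memD[OF vf] by auto
  have "u = f" if "u \<in> scc W G f" for u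
  proof (rule ccontr)
    assume "u \<noteq> f"
    from that have "(f, u) \<in> G\<^sup>*" and "(u, f) \<in> G\<^sup>*" unfolding scc_def by auto
    from \<open>(f, u) \<in> G\<^sup>*\<close> \<open>u \<noteq> f\<close> obtain y where "(f, y) \<in> G" and "(y, u) \<in> G\<^sup>*"
      by (metis converse_rtranclE)
    have "(y, f) \<in> G\<^sup>*" using \<open>(y, u) \<in> G\<^sup>*\<close> \<open>(u, f) \<in> G\<^sup>*\<close> by (rule rtrancl_trans)
    moreover have "y = v" using M_injective[OF dgraph_from_F[OF \<open>(f, y) \<in> G\<close> \<open>f \<in> F\<close>] vf] .
    ultimately show False using unreachable by simp
  qed
  moreover have "f \<in> scc W G f" by (rule scc_refl) (simp add: \<open>f \<in> F\<close>)
  ultimately show "scc W G f = {f}" by blast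
  have "u = v" if "u \<in> scc W G v" for u
  proof (rule ccontr)
    assume "u \<noteq> v"
    from that have "(v, u) \<in> G\<^sup>*" and "(u, v) \<in> G\<^sup>*" unfolding scc_def by auto
    from \<open>(u, v) \<in> G\<^sup>*\<close> \<open>u \<noteq> v\<close> obtain y where "(u, y) \<in> G\<^sup>*" and "(y, v) \<in> G"
      by (metis rtranclE)
    have "(v, y) \<in> G\<^sup>*" using \<open>(v, u) \<in> G\<^sup>*\<close> \<open>(u, y) \<in> G\<^sup>*\<close> by (rule rtrancl_trans)
    moreover have "y = f" using M_functional[OF dgraph_into_V[OF \<open>(y, v) \<in> G\<close> \<open>v \<in> V\<close>] vf] by simp
    ultimately show False using unreachable by simp
  qed
  moreover have "v \<in> scc W G v" by (rule scc_refl) (simp add: \<open>v \<in> V\<close>)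
  ultimately show "scc W G v = {v}" by blast
qed

lemma cluster_mate:
  assumes vf: "(v, f) \<in> M"
  shows "cluster v = cluster f"
proof (cases "(v, f) \<in> G\<^sup>*")
  case True
  then have "v \<in> scc W G f"
    using dgraph_mate[OF vf] M_memD[OF vf] unfolding scc_def by auto
  then show ?thesis unfolding cluster_def using scc_eq by metis
next
  case False
  show ?thesis
    unfolding cluster_def scc_singleton_if_unreachable[OF vf False]
      matched_singleton_F[OF vf] matched_singleton_V[OF vf] by auto
qed

lemma cluster_eq:
  assumes "u \<in> cluster x"
  shows "cluster u = cluster x"
proof -
  from assms consider "u \<in> scc W G x" | y where "y \<in> scc W G x" "(y, u) \<in> M \<or> (u, y) \<in> M"
    unfolding cluster_def matched_def by blast
  then show ?thesis
  proof cases
    case 1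
    then show ?thesis unfolding cluster_def using scc_eq by metis
  next
    case 2
    then have "cluster u = cluster y" using cluster_mate by metis
    also have "\<dots> = cluster x" using 2(1) unfolding cluster_def using scc_eq by metis
    finally show ?thesis .
  qed
qed

definition cluster_edges :: "'a set \<Rightarrow> ('a \<times> 'a set) set" where
  "cluster_edges D = {(x, cluster w) | x w. (x, w) \<in> G \<and> x \<notin> cluster w \<and> w \<in> D}"

lemma cluster_edges_Un: "cluster_edges (A \<union> B) = cluster_edges A \<union> cluster_edges B"
  unfolding cluster_edges_def by blast

lemma merge_clust_eq: "merge M (clust W G) = (cluster ` W, cluster_edges W)"
proof -
  have "(\<lambda>S. S \<union> matched M S) ` scc W G ` W = cluster ` W"
    unfolding cluster_def by (simp add: image_image)
  moreover have "{(x, S \<union> matched M S) | x S.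
      (x, S) \<in> {(x, scc W G w) | x w. x \<in> W \<and> w \<in> W \<and> (x, w) \<in> G \<and> x \<notin> scc W G w}
      \<and> x \<notin> matched M S} = cluster_edges W" (is "?merged = _")
  proof (intro equalityI subsetI)
    fix p assume "p \<in> ?merged"
    then obtain x w where "p = (x, cluster w)" "(x, w) \<in> G" "x \<notin> cluster w" "w \<in> W"
      unfolding cluster_def by blast
    then show "p \<in> cluster_edges W" unfolding cluster_edges_def by blast
  next
    fix p assume "p \<in> cluster_edges W"
    then obtain x w where "p = (x, cluster w)" "(x, w) \<in> G" "x \<notin> cluster w" "w \<in> W"
      unfolding cluster_edges_def by blast
    then show "p \<in> ?merged" unfolding cluster_def using dgraph_in_W by blast
  qed
  ultimately show ?thesis unfolding merge_def clust_def by simp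
qed

(* The invariant of Algorithm 1: B' is the subgraph induced by the remaining vertices V' \<union> F',
  which M matches among themselves and which no edge of G leaves. *)
definition residual :: "'a set \<Rightarrow> 'a set \<Rightarrow> ('a \<times> 'a) set \<Rightarrow> bool" where
  "residual V' F' E' \<longleftrightarrow> V' \<subseteq> V \<and> F' \<subseteq> F \<and> E' = E \<inter> (V' \<times> F') \<and>
     (\<forall>(v, f) \<in> M. v \<in> V' \<longleftrightarrow> f \<in> F') \<and> G `` (V' \<union> F') \<subseteq> V' \<union> F'"

lemma residual_init: "residual V F E"
  unfolding residual_def using M_memD dgraph_in_W E_subset by auto

context
  fixes V' F' E'
  assumes residual: "residual V' F' E'"
begin

lemma residual_subset: "V' \<subseteq> V" "F' \<subseteq> F" "E' = E \<inter> (V' \<times> F')"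
  using residual unfolding residual_def by auto

lemma residual_mate_iff: "(v, f) \<in> M \<Longrightarrow> v \<in> V' \<longleftrightarrow> f \<in> F'"
  using residual unfolding residual_def by auto

lemma residual_closed: "G `` (V' \<union> F') \<subseteq> V' \<union> F'"
  using residual unfolding residual_def by auto

lemma adj_residual_subset: "adj E' X \<subseteq> V'"
  using residual_subset unfolding adj_def by auto

lemma matched_subset_adj:
  assumes "X \<subseteq> F'"
  shows "matched M X \<subseteq> adj E' X"
proof
  fix u assume "u \<in> matched M X"
  then obtain f where "f \<in> X" and "u = mate f"
    using matched_F_eq_image assms residual_subset by auto
  then have "(u, f) \<in> M" using mate_in_M assms residual_subset by auto
  then show "u \<in> adj E' X"
    using residual_mate_iff M_subset_E \<open>f \<in> X\<close> assms residual_subset unfolding adj_def by auto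
qed

(* M(X) \<subseteq> adj(X) and |M(X)| = |X|, so Hall's condition holds automatically and equality of
  cardinalities reduces to an inclusion. *)
lemma self_contained_iff_adj_subset_matched:
  assumes "X \<subseteq> F'"
  shows "self_contained_set F' E' X \<longleftrightarrow> adj E' X \<subseteq> matched M X"
proof
  assume "self_contained_set F' E' X"
  then have "card (matched M X) = card (adj E' X)"
    using card_matched_F assms residual_subset unfolding self_contained_set_def by auto
  moreover have "finite (adj E' X)"
    using adj_residual_subset residual_subset finite_V finite_subset by metis
  ultimately show "adj E' X \<subseteq> matched M X"
    using card_subset_eq matched_subset_adj[OF assms] by blast
next
  assume "adj E' X \<subseteq> matched M X"
  then have "adj E' X = matched M X" using matched_subset_adj[OF assms] by auto
  moreover have "card Y \<le> card (adj E' Y)" if "Y \<subseteq> X" for Y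
  proof -
    have "card Y = card (matched M Y)" using card_matched_F that assms residual_subset by auto
    also have "\<dots> \<le> card (adj E' Y)"
      using card_mono adj_residual_subset residual_subset finite_V finite_subset
        matched_subset_adj that assms by (metis subset_trans)
    finally show ?thesis .
  qed
  ultimately show "self_contained_set F' E' X"
    unfolding self_contained_set_def using card_matched_F assms residual_subset by auto
qed

lemma self_contained_residual: "self_contained_set F' E' F'"
proof -
  have "adj E' F' \<subseteq> matched M F'"
  proof
    fix v assume "v \<in> adj E' F'"
    then have "v \<in> V'" using adj_residual_subset by blast
    then obtain f where "(v, f) \<in> M" using ex_M_V residual_subset(1) by blast
    then show "v \<in> matched M F'"
      using residual_mate_iff \<open>v \<in> V'\<close> unfolding matched_def by blast
  qed
  then show ?thesis using self_contained_iff_adj_subset_matched by blast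
qed

lemma residual_F_nonempty: "V' \<union> F' \<noteq> {} \<Longrightarrow> F' \<noteq> {}"
  using ex_M_V residual_mate_iff residual_subset(1) by blast

lemma self_contained_ancestors:
  assumes "h \<in> F'"
  shows "self_contained_set F' E' {g \<in> F'. (g, h) \<in> G\<^sup>*}" (is "self_contained_set F' E' ?A")
proof -
  have "adj E' ?A \<subseteq> matched M ?A"
  proof
    fix v assume "v \<in> adj E' ?A"
    then obtain g where g: "g \<in> ?A" "(v, g) \<in> E'" unfolding adj_def by auto
    show "v \<in> matched M ?A"
    proof (cases "(v, g) \<in> M")
      case True
      then show ?thesis using g unfolding matched_def by auto
    next
      case False
      have "v \<in> V'" using g residual_subset by auto
      then obtain f where vf: "(v, f) \<in> M" using ex_M_V residual_subset(1) by blast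
      have "(v, g) \<in> G" using False g residual_subset dgraph_unmatched by auto
      moreover have "(g, h) \<in> G\<^sup>*" using g(1) by simp
      ultimately have "(v, h) \<in> G\<^sup>*" by (rule converse_rtrancl_into_rtrancl)
      with dgraph_mate[OF vf] have "(f, h) \<in> G\<^sup>*" by (rule converse_rtrancl_into_rtrancl)
      then have "f \<in> ?A" using residual_mate_iff[OF vf] \<open>v \<in> V'\<close> by simp
      then show ?thesis using vf unfolding matched_def by auto
    qed
  qed
  then show ?thesis using self_contained_iff_adj_subset_matched by auto
qed

context
  fixes S C
  assumes self_contained: "self_contained_set F' E' S" and C_def: "C = S \<union> adj E' S"
begin

lemma S_subset: "S \<subseteq> F'"
  using self_contained unfolding self_contained_set_def by blast

lemma adj_eq_matched: "adj E' S = matched M S"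
  using self_contained self_contained_iff_adj_subset_matched matched_subset_adj S_subset
  by blast

lemma C_subset: "C \<subseteq> V' \<union> F'"
  using C_def S_subset adj_residual_subset by auto

lemma C_Int_F: "C \<inter> F = S"
  using C_def S_subset adj_residual_subset residual_subset V_F_disjoint by blast

lemma C_mate_iff:
  assumes vf: "(v, f) \<in> M"
  shows "v \<in> C \<longleftrightarrow> f \<in> C"
proof -
  have SF: "S \<subseteq> F" using S_subset residual_subset by auto
  have "v \<notin> S" using vf M_memD SF V_F_disjoint by auto
  then have "v \<in> C \<longleftrightarrow> v \<in> mate ` S"
    using C_def adj_eq_matched matched_F_eq_image[OF SF] by auto
  also have "\<dots> \<longleftrightarrow> f \<in> S"
    using vf mate_in_M mate_eq M_functional SF by blast
  also have "\<dots> \<longleftrightarrow> f \<in> C"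
    using C_Int_F M_memD[OF vf] by auto
  finally show ?thesis .
qed

lemma matched_C_subset: "matched M C \<subseteq> C"
  unfolding matched_def using C_mate_iff by blast

lemma residual_minus_closed: "G `` ((V' \<union> F') - C) \<subseteq> (V' \<union> F') - C"
proof
  fix y assume "y \<in> G `` ((V' \<union> F') - C)"
  then obtain x where xy: "(x, y) \<in> G" and x: "x \<in> V' \<union> F'" "x \<notin> C" by blast
  have y: "y \<in> V' \<union> F'" using residual_closed xy x by blast
  show "y \<in> (V' \<union> F') - C"
  proof (cases "y \<in> F")
    case True
    then have "(x, y) \<in> E - M" using dgraph_into_F xy by blast
    then have "x \<in> V'" using x E_subset residual_subset V_F_disjoint by blast
    then have "y \<in> S \<Longrightarrow> x \<in> adj E' S"
      using \<open>(x, y) \<in> E - M\<close> S_subset residual_subset unfolding adj_def by auto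
    then show ?thesis using x y C_def C_Int_F True by blast
  next
    case False
    then have "(y, x) \<in> M" using dgraph_into_V xy y residual_subset by blast
    then show ?thesis using C_mate_iff x y by blast
  qed
qed

lemma residual_remove: "residual (V' - C) (F' - C) (E' \<inter> ((V' - C) \<times> (F' - C)))"
proof -
  have "(V' - C) \<union> (F' - C) = (V' \<union> F') - C" by auto
  then show ?thesis
    unfolding residual_def using residual_subset residual_mate_iff C_mate_iff residual_minus_closed
    by auto
qed

lemma edges_into_C:
  "{(v, C) | v. v \<in> adj E S - adj E' S} = {(x, C) | x w. (x, w) \<in> G \<and> x \<notin> C \<and> w \<in> C}"
proof (intro equalityI subsetI)
  fix p assume "p \<in> {(v, C) | v. v \<in> adj E S - adj E' S}"
  then obtain v g where p: "p = (v, C)" and g: "g \<in> S" "(v, g) \<in> E" and "v \<notin> adj E' S"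
    unfolding adj_def by auto
  have "v \<in> V" using g E_subset by auto
  have "v \<notin> V'" using \<open>v \<notin> adj E' S\<close> g S_subset residual_subset unfolding adj_def by auto
  then have "(v, g) \<notin> M" using residual_mate_iff g S_subset by auto
  then have "(v, g) \<in> G" using g dgraph_unmatched by auto
  moreover have "v \<notin> C" using \<open>v \<notin> V'\<close> \<open>v \<in> V\<close> C_subset residual_subset(2) V_F_disjoint by auto
  ultimately show "p \<in> {(x, C) | x w. (x, w) \<in> G \<and> x \<notin> C \<and> w \<in> C}"
    using p g C_def by auto
next
  fix p assume "p \<in> {(x, C) | x w. (x, w) \<in> G \<and> x \<notin> C \<and> w \<in> C}"
  then obtain x w where p: "p = (x, C)" and xw: "(x, w) \<in> G" and "x \<notin> C" "w \<in> C" by auto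
  have "w \<in> F"
  proof (rule ccontr)
    assume "w \<notin> F"
    then have "(w, x) \<in> M" using dgraph_into_V xw \<open>w \<in> C\<close> C_subset residual_subset by blast
    then show False using C_mate_iff \<open>x \<notin> C\<close> \<open>w \<in> C\<close> by blast
  qed
  then have "w \<in> S" and "(x, w) \<in> E" using C_Int_F \<open>w \<in> C\<close> dgraph_into_F xw by auto
  then show "p \<in> {(v, C) | v. v \<in> adj E S - adj E' S}"
    using p \<open>x \<notin> C\<close> C_def unfolding adj_def by auto
qed

context
  assumes no_smaller: "\<And>S'. S' \<subset> S \<Longrightarrow> self_contained_set F' E' S' \<Longrightarrow> S' = {}"
begin

lemma S_strongly_connected:
  assumes "g \<in> S" and "h \<in> S"
  shows "(g, h) \<in> G\<^sup>*"
proof -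
  define A where "A = {g \<in> F'. (g, h) \<in> G\<^sup>*}"
  have "A \<subseteq> S"
  proof
    fix g assume "g \<in> A"
    have "g \<in> C"
    proof (rule ccontr)
      assume "g \<notin> C"
      then have "h \<in> (V' \<union> F') - C"
        using \<open>g \<in> A\<close> rtrancl_Image_closed[OF residual_minus_closed] unfolding A_def by blast
      then show False using \<open>h \<in> S\<close> C_def by blast
    qed
    then show "g \<in> S" using C_Int_F \<open>g \<in> A\<close> residual_subset(2) unfolding A_def by blast
  qed
  moreover have "h \<in> A" using \<open>h \<in> S\<close> S_subset unfolding A_def by blast
  moreover have "self_contained_set F' E' A"
    using self_contained_ancestors \<open>h \<in> S\<close> S_subset unfolding A_def by blast
  ultimately have "A = S" using no_smaller by blast
  then show ?thesis using \<open>g \<in> S\<close> unfolding A_def by blast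
qed

lemma cluster_S:
  assumes "h \<in> S"
  shows "cluster h = C"
proof
  have "S \<subseteq> scc W G h"
    unfolding scc_def using S_strongly_connected assms S_subset residual_subset by auto
  then show "C \<subseteq> cluster h"
    unfolding cluster_def C_def adj_eq_matched matched_def by blast
next
  have "scc W G h \<subseteq> C"
  proof
    fix u assume "u \<in> scc W G h"
    then have "(h, u) \<in> G\<^sup>*" and "(u, h) \<in> G\<^sup>*" unfolding scc_def by auto
    have "u \<in> V' \<union> F'"
      using rtrancl_Image_closed[OF residual_closed \<open>(h, u) \<in> G\<^sup>*\<close>] assms S_subset by blast
    then show "u \<in> C"
      using rtrancl_Image_closed[OF residual_minus_closed \<open>(u, h) \<in> G\<^sup>*\<close>] assms C_def by blast
  qed
  then show "cluster h \<subseteq> C"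
    unfolding cluster_def using matched_C_subset unfolding matched_def by blast
qed

lemma cluster_C:
  assumes "x \<in> C"
  shows "cluster x = C"
proof -
  obtain h where "h \<in> S" using assms C_def unfolding adj_def by auto
  then have "cluster h = C" by (rule cluster_S)
  then show ?thesis using cluster_eq assms by metis
qed

lemma cluster_edges_C: "cluster_edges C = {(v, C) | v. v \<in> adj E S - adj E' S}"
  unfolding edges_into_C cluster_edges_def by (auto simp: cluster_C) (metis cluster_C)

end

end

end

lemma alg1_result:
  assumes "alg1 E V' F' E' Vs Es res" and "residual V' F' E'"
    and "Vs = cluster ` (W - (V' \<union> F'))" and "Es = cluster_edges (W - (V' \<union> F'))"
  shows "res = (cluster ` W, cluster_edges W)"
  using assms
proof (induction rule: alg1.induct)
  case (stop V' F' E' Vs Es)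
  then show ?case by simp
next
  case (step V' F' E' S C Vs Es res)
  have sc: "self_contained_set F' E' S" and "S \<noteq> {}"
    and no_smaller: "\<And>S'. S' \<subset> S \<Longrightarrow> self_contained_set F' E' S' \<Longrightarrow> S' = {}"
    using step.hyps(2) unfolding minimal_self_contained_def by blast+
  have removed: "W - ((V' - C) \<union> (F' - C)) = (W - (V' \<union> F')) \<union> C"
    using C_subset[OF step.prems(1) sc step.hyps(3)] residual_subset[OF step.prems(1)] by blast
  have "cluster ` C = {C}"
    using cluster_C[OF step.prems(1) sc step.hyps(3) no_smaller] \<open>S \<noteq> {}\<close> step.hyps(3) by blast
  then have "insert C Vs = cluster ` (W - ((V' - C) \<union> (F' - C)))"
    unfolding removed image_Un step.prems(2) by blast
  moreover have "Es \<union> {(v, C) | v. v \<in> adj E S - adj E' S} =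
      cluster_edges (W - ((V' - C) \<union> (F' - C)))"
    using cluster_edges_C[OF step.prems(1) sc step.hyps(3) no_smaller]
    unfolding removed cluster_edges_Un step.prems(3) by simp
  ultimately show ?case
    using step.IH residual_remove[OF step.prems(1) sc step.hyps(3)] by blast
qed

lemma ex_alg1_run: "residual V' F' E' \<Longrightarrow> \<exists>res. alg1 E V' F' E' Vs Es res"
proof (induction "card (V' \<union> F')" arbitrary: V' F' E' Vs Es rule: less_induct)
  case less
  show ?case
  proof (cases "V' \<union> F' = {}")
    case True
    then show ?thesis using alg1.stop[OF True] by blast
  next
    case False
    have "finite F'" using finite_subset[OF residual_subset(2)[OF less.prems] finite_F] .
    then obtain S where min: "minimal_self_contained F' E' S"
      using exists_minimal_self_contained residual_F_nonempty[OF less.prems False]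
        self_contained_residual[OF less.prems] by blast
    define C where "C = S \<union> adj E' S"
    have sc: "self_contained_set F' E' S" and "S \<noteq> {}"
      using min unfolding minimal_self_contained_def by blast+
    have "(V' - C) \<union> (F' - C) \<subset> V' \<union> F'"
      using C_subset[OF less.prems sc C_def] \<open>S \<noteq> {}\<close> C_def by blast
    moreover have "finite (V' \<union> F')"
      using finite_subset[OF residual_subset(1)[OF less.prems] finite_V] \<open>finite F'\<close> by simp
    ultimately have "card ((V' - C) \<union> (F' - C)) < card (V' \<union> F')"
      by (rule psubset_card_mono[rotated])
    then obtain res where "alg1 E (V' - C) (F' - C) (E' \<inter> ((V' - C) \<times> (F' - C)))
        (insert C Vs) (Es \<union> {(v, C) | v. v \<in> adj E S - adj E' S}) res"
      using less.hyps[OF _ residual_remove[OF less.prems sc C_def]] by blast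
    then show ?thesis using alg1.step[OF False min C_def] by blast
  qed
qed

end

theorem lemma41:
  fixes V F :: "'a set" and E M :: "('a \<times> 'a) set"
  assumes "finite V" and "finite F" and "bipartite V F E"
    and "self_contained_graph V F E"
    and "perfect_matching V F E M"
  shows "(\<exists>res. alg1 E V F E {} {} res) \<and>
         (\<forall>res. alg1 E V F E {} {} res \<longrightarrow> res = merge M (clust (V \<union> F) (dgraph E M)))"
proof -
  interpret matched_bipartite V F E M
    using assms(1-3,5) by unfold_locales
  have "res = merge M (clust (V \<union> F) (dgraph E M))" if "alg1 E V F E {} {} res" for res
  proof -
    have "res = (cluster ` W, cluster_edges W)"
      by (rule alg1_result[OF that residual_init]) (simp_all add: cluster_edges_def)
    then show ?thesis using merge_clust_eq by simp
  qed
  then show ?thesis using ex_alg1_run[OF residual_init] by blast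
qed

end
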